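(* Let $\mathcal{D}$ be the arena of a $p$-periodic graph on $V$, let $\mathcal{A}$ be an augmented arena of $\mathcal{D}$, and let $\mathcal{A}^*$ be the maximum augmented arena. Then $\mathcal{A}=\mathcal{A}^*$ if and only if for every $t\in\mathbb{Z}_p$ and $x,y\in V$ with $((t,x),([t+1]_p,y))\notin E(\mathcal{A})$ there is no $z\in\Gamma_t(x,\mathcal{D})$ such that $(t,y)$ is a shadow corner of $([t+1]_p,z)$ with respect to $\mathcal{A}$.
   Context: Let $V$ be a finite set and $p\ge 1$ an integer; $[t]_p$ denotes $t \bmod p$. A $p$-periodic graph $\mathcal{G}=(G_0,\dots,G_{p-1})^*$ is the infinite sequence of directed graphs $G_t=(V,E_{[t]_p})$ where $E_0,\dots,E_{p-1}\subseteq V\times V$ (self-loops allowed), each $G_i$ sinkless. An arena on $V$ of length $p$ is a directed graph with vertex set $\mathbb{Z}_p\times V$ (temporal nodes) all of whose edges have the form $((i,w),([i+1]_p,w'))$. The arena of $\mathcal{G}$ is the arena $\mathcal{D}$ with $((i,u),([i+1]_p,v))\in E(\mathcal{D})$ iff $(u,v)\in E_i$. Write $\Gamma_t(u,\mathcal{M})=\{v : ((t,u),([t+1]_p,v))\in E(\mathcal{M})\}$. Game: first the cop, then the robber choose vertices. In each round $t$, with cop at $c$ and robber at $r$, the cop must move to some $c'\in\Gamma_{[t]_p}(c,\mathcal{D})$; if $c'=r$ the cop wins; otherwise the robber must move to some $r'\in\Gamma_{[t]_p}(r,\mathcal{D})$ and the next round starts. A configuration $(t,c,r)$ ($t\in\mathbb{Z}_p$)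 is the state at the start of a round with index $\equiv t\pmod p$, cop at $c$, robber at $r$, cop to move; it is copwin if from it the cop can force capture in finitely many rounds against every robber strategy. An augmented arena of $\mathcal{D}$ is an arena $\mathcal{A}$ with $E(\mathcal{D})\subseteq E(\mathcal{A})$ such that for every edge $((t,x),([t+1]_p,y))\in E(\mathcal{A})$ the configuration $(t,x,y)$ is copwin. $\mathcal{A}^*$ denotes the maximum augmented arena, whose edge set is the union of the edge sets of all augmented arenas. Given an augmented arena $\mathcal{A}$, a temporal node $(t,u)$ is a shadow corner of $([t+1]_p,v)$ if $v\neq u$ and $\Gamma_t(u,\mathcal{D})\subseteq\Gamma_{[t+1]_p}(v,\mathcal{A})$. *)

theory Defs
  imports Main
begin

text \<open>Temporal nodes are pairs (i, w) with i < p (representing Z_p) and w in V.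
  Time indices are natural numbers taken modulo p.\<close>

type_synonym 'v tnode = "nat \<times> 'v"
type_synonym 'v arena = "('v tnode \<times> 'v tnode) set"

definition periodic_graph :: "'v set \<Rightarrow> nat \<Rightarrow> (nat \<Rightarrow> ('v \<times> 'v) set) \<Rightarrow> bool" where
  "periodic_graph V p E \<longleftrightarrow> finite V \<and> p \<ge> 1 \<and>
     (\<forall>i<p. E i \<subseteq> V \<times> V) \<and>
     (\<forall>i<p. \<forall>u\<in>V. \<exists>v. (u, v) \<in> E i)"

definition is_arena :: "'v set \<Rightarrow> nat \<Rightarrow> 'v arena \<Rightarrow> bool" where
  "is_arena V p M \<longleftrightarrow>
     (\<forall>e\<in>M. \<exists>i w w'. i < p \<and> w \<in> V \<and> w' \<in> V \<and> e = ((i, w), ((i + 1) mod p, w')))"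

definition arena_of :: "nat \<Rightarrow> (nat \<Rightarrow> ('v \<times> 'v) set) \<Rightarrow> 'v arena" where
  "arena_of p E = {((i, u), ((i + 1) mod p, v)) | i u v. i < p \<and> (u, v) \<in> E i}"

definition Gamma :: "nat \<Rightarrow> nat \<Rightarrow> 'v \<Rightarrow> 'v arena \<Rightarrow> 'v set" where
  "Gamma p t u M = {v. ((t, u), ((t + 1) mod p, v)) \<in> M}"

text \<open>copwin p D (t, c, r): from configuration (t,c,r), cop to move, the cop can force
  capture in finitely many rounds (least fixed point / attractor of the capture condition).\<close>
inductive copwin :: "nat \<Rightarrow> 'v arena \<Rightarrow> nat \<Rightarrow> 'v \<Rightarrow> 'v \<Rightarrow> bool" for p D where
  step: "c' \<in> Gamma p t c D \<Longrightarrow>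
         (c' = r \<or> (\<forall>r' \<in> Gamma p t r D. copwin p D ((t + 1) mod p) c' r')) \<Longrightarrow>
         copwin p D t c r"

definition augmented_arena :: "'v set \<Rightarrow> nat \<Rightarrow> 'v arena \<Rightarrow> 'v arena \<Rightarrow> bool" where
  "augmented_arena V p D A \<longleftrightarrow> is_arena V p A \<and> D \<subseteq> A \<and>
     (\<forall>t x t' y. ((t, x), (t', y)) \<in> A \<longrightarrow> copwin p D t x y)"

definition max_augmented_arena :: "'v set \<Rightarrow> nat \<Rightarrow> 'v arena \<Rightarrow> 'v arena" where
  "max_augmented_arena V p D = \<Union>{A. augmented_arena V p D A}"

definition shadow_corner :: "nat \<Rightarrow> 'v arena \<Rightarrow> 'v arena \<Rightarrow> nat \<Rightarrow> 'v \<Rightarrow> 'v \<Rightarrow> bool" where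
  "shadow_corner p D A t u v \<longleftrightarrow>
     v \<noteq> u \<and> Gamma p t u D \<subseteq> Gamma p ((t + 1) mod p) v A"

end

theory Submission
  imports Defs
begin

text \<open>If a missing edge ((t,x),(t+1,y)) can be added to A because (t,y) is a shadow corner of
  some (t+1,z) with z a D-move of x, then the cop wins from (t,x,y) by moving to z: every robber
  reply r' lies in the A-neighbourhood of (t+1,z), and A-edges are copwin. Hence such an edge
  witnesses that A is not maximum. Conversely, if an edge of the maximum arena is missing from A,
  follow the cop's winning strategy from that configuration: since D \<subseteq> A the cop never captures
  at once, and at each round either the robber's replies are all A-neighbours of the cop's next
  position (a shadow corner) or some reply leads to a later copwin configuration whose edge is
  again missing from A. Induction on the winning strategy thus produces an addable edge.\<close>

definition addable_edge :: "'v set \<Rightarrow> nat \<Rightarrow> 'v arena \<Rightarrow> 'v arena \<Rightarrow> nat \<Rightarrow> 'v \<Rightarrow> 'v \<Rightarrow> bool" where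
  "addable_edge V p D A t x y \<longleftrightarrow> t < p \<and> x \<in> V \<and> y \<in> V \<and>
     ((t, x), ((t + 1) mod p, y)) \<notin> A \<and>
     (\<exists>z \<in> Gamma p t x D. shadow_corner p D A t y z)"

lemma is_arena_arena_of:
  assumes "periodic_graph V p E"
  shows "is_arena V p (arena_of p E)"
  using assms unfolding periodic_graph_def is_arena_def arena_of_def by blast

lemma Gamma_subset_vertices:
  assumes "is_arena V p D"
  shows "Gamma p t x D \<subseteq> V"
  using assms unfolding is_arena_def Gamma_def by fastforce

lemma augmented_arena_subset_max:
  assumes "augmented_arena V p D A"
  shows "A \<subseteq> max_augmented_arena V p D"
  using assms unfolding max_augmented_arena_def by blast

lemma augmented_arena_insert:
  assumes "augmented_arena V p D A" "t < p" "x \<in> V" "y \<in> V" "copwin p D t x y"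
  shows "augmented_arena V p D (insert ((t, x), ((t + 1) mod p, y)) A)"
  using assms unfolding augmented_arena_def is_arena_def by blast

lemma copwin_if_shadow_corner:
  assumes aug: "augmented_arena V p D A"
    and z: "z \<in> Gamma p t x D" and corner: "shadow_corner p D A t y z"
  shows "copwin p D t x y"
proof (rule copwin.step[OF z])
  have "copwin p D ((t + 1) mod p) z r'" if "r' \<in> Gamma p t y D" for r'
  proof -
    from that corner have "(((t + 1) mod p, z), (((t + 1) mod p + 1) mod p, r')) \<in> A"
      unfolding shadow_corner_def Gamma_def by auto
    with aug show ?thesis unfolding augmented_arena_def by blast
  qed
  then show "z = y \<or> (\<forall>r' \<in> Gamma p t y D. copwin p D ((t + 1) mod p) z r')"
    by blast
qed

lemma copwin_missing_edge_imp_addable_edge: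
  assumes arena: "is_arena V p D" and DA: "D \<subseteq> A"
  shows "copwin p D t x y \<Longrightarrow> t < p \<Longrightarrow> x \<in> V \<Longrightarrow> y \<in> V \<Longrightarrow>
    ((t, x), ((t + 1) mod p, y)) \<notin> A \<Longrightarrow> \<exists>t' x' y'. addable_edge V p D A t' x' y'"
proof (induction t x y rule: copwin.induct)
  case (step c' t c r)
  let ?s = "(t + 1) mod p"
  have "c' \<noteq> r"
  proof
    assume "c' = r"
    with step.hyps(1) have "((t, c), (?s, r)) \<in> D" unfolding Gamma_def by simp
    with DA step.prems(4) show False by blast
  qed
  moreover have "?s < p" "c' \<in> V"
    using step.prems(1) step.hyps(1) Gamma_subset_vertices[OF arena] by auto
  ultimately have IH: "\<exists>t' x' y'. addable_edge V p D A t' x' y'"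
    if "r' \<in> Gamma p t r D" "((?s, c'), ((?s + 1) mod p, r')) \<notin> A" for r'
    using that step.IH Gamma_subset_vertices[OF arena] by blast
  show ?case
  proof (cases "Gamma p t r D \<subseteq> Gamma p ?s c' A")
    case True
    with \<open>c' \<noteq> r\<close> step.hyps(1) step.prems have "addable_edge V p D A t c r"
      unfolding addable_edge_def shadow_corner_def by blast
    then show ?thesis by blast
  next
    case False
    then obtain r' where "r' \<in> Gamma p t r D" "((?s, c'), ((?s + 1) mod p, r')) \<notin> A"
      unfolding Gamma_def by auto
    then show ?thesis using IH by blast
  qed
qed

lemma max_augmented_arena_iff_no_addable_edge:
  assumes arena: "is_arena V p D" and aug: "augmented_arena V p D A"
  shows "A = max_augmented_arena V p D \<longleftrightarrow> (\<nexists>t x y. addable_edge V p D A t x y)"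
proof
  assume max: "A = max_augmented_arena V p D"
  show "\<nexists>t x y. addable_edge V p D A t x y"
  proof
    assume "\<exists>t x y. addable_edge V p D A t x y"
    then obtain t x y where add: "addable_edge V p D A t x y" by blast
    then have "copwin p D t x y"
      using copwin_if_shadow_corner[OF aug] unfolding addable_edge_def by blast
    with add aug have "augmented_arena V p D (insert ((t, x), ((t + 1) mod p, y)) A)"
      unfolding addable_edge_def by (blast intro: augmented_arena_insert)
    from augmented_arena_subset_max[OF this] max add show False
      unfolding addable_edge_def by blast
  qed
next
  assume none: "\<nexists>t x y. addable_edge V p D A t x y"
  have "e \<in> A" if "e \<in> max_augmented_arena V p D" for e
  proof -
    from that obtain B where B: "augmented_arena V p D B" "e \<in> B"
      unfolding max_augmented_arena_def by blast
    then obtain t x y where e: "t < p" "x \<in> V" "y \<in> V" "e = ((t, x), ((t + 1) mod p, y))"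
      unfolding augmented_arena_def is_arena_def by blast
    moreover have "copwin p D t x y" using B e(4) unfolding augmented_arena_def by blast
    moreover have "D \<subseteq> A" using aug unfolding augmented_arena_def by blast
    ultimately show "e \<in> A"
      using copwin_missing_edge_imp_addable_edge[OF arena] none by blast
  qed
  with augmented_arena_subset_max[OF aug] show "A = max_augmented_arena V p D" by blast
qed

theorem theorem3:
  fixes V :: "'v set" and p :: nat and E :: "nat \<Rightarrow> ('v \<times> 'v) set" and A :: "'v arena"
  assumes "periodic_graph V p E"
    and "augmented_arena V p (arena_of p E) A"
  shows "A = max_augmented_arena V p (arena_of p E) \<longleftrightarrow>
    (\<forall>t<p. \<forall>x\<in>V. \<forall>y\<in>V. ((t, x), ((t + 1) mod p, y)) \<notin> A \<longrightarrow>
       \<not> (\<exists>z \<in> Gamma p t x (arena_of p E). shadow_corner p (arena_of p E) A t y z))"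
  using max_augmented_arena_iff_no_addable_edge[OF is_arena_arena_of[OF assms(1)] assms(2)]
  unfolding addable_edge_def by blast

end
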